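(* Let $\Sigma$ be an alphabet and $L\subseteq\Sigma^*$. There exists an MPDA $\mathcal A$ with input alphabet $\Sigma$ and $L(\mathcal A)=L$ if and only if $L$ is context-free and every string in $L$ has length at least $2$.
   Context: A Moore push-down automaton (MPDA) is $\mathcal A=(Q,\Sigma,\Gamma,\delta,\tau,I,F)$ with finite sets of states $Q$, input symbols $\Sigma$, stack symbols $\Gamma$, transitions $\delta\subseteq(Q\times\Gamma^{\le1}\times\Gamma^{\le1}\times Q)\setminus(Q\times\Gamma\times\Gamma\times Q)$ (where $\Gamma^{\le1}=\{\varepsilon\}\cup\Gamma$; so a transition pops one symbol, pushes one symbol, or ignores the stack), output function $\tau:Q\to\Sigma$, and initial/final states $I,F\subseteq Q$. Configurations are pairs $\langle q,\alpha\rangle\in Q\times\Gamma^*$ (top of stack leftmost). Moves: $\langle q,\gamma\alpha\rangle\vdash\langle q',\gamma'\alpha\rangle$ for $(q,\gamma,\gamma',q')\in\delta$, $\alpha\in\Gamma^*$, provided $\gamma\alpha\neq\varepsilon$. A configuration is initial if $q\in I$ and $\alpha\in\Gamma$ (exactly one stack symbol), final if $q\in F$ and $\alpha=\varepsilon$. An accepting run is a sequence $\langle q_0,\alpha_0\rangle,\dots,\langle q_n,\alpha_n\rangle$ of configurations related successively by moves, starting in an initial and ending in a final configuration. $L(\mathcal A)$ is the set of strings $\tau(q_0)\cdots\tau(q_n)$ over all accepting runs. *)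

theory Defs
  imports Main
begin

text \<open>States and stack symbols are natural numbers (any finite set embeds into nat).
  An element of Gamma^{<=1} is an option: None = epsilon, Some g = g.\<close>

record 'a mpda =
  states :: "nat set"
  stack_syms :: "nat set"
  delta :: "(nat \<times> nat option \<times> nat option \<times> nat) set"
  out :: "nat \<Rightarrow> 'a"
  init :: "nat set"
  fin :: "nat set"

definition opt_list :: "nat option \<Rightarrow> nat list" where
  "opt_list x = (case x of None \<Rightarrow> [] | Some g \<Rightarrow> [g])"

definition wf_mpda :: "'a set \<Rightarrow> 'a mpda \<Rightarrow> bool" where
  "wf_mpda Sig A \<longleftrightarrow>
     finite (states A) \<and> finite (stack_syms A) \<and>
     (\<forall>(q, g, g', q') \<in> delta A. q \<in> states A \<and> q' \<in> states A \<and>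
        set_option g \<subseteq> stack_syms A \<and> set_option g' \<subseteq> stack_syms A \<and>
        \<not> (g \<noteq> None \<and> g' \<noteq> None)) \<and>
     (\<forall>q \<in> states A. out A q \<in> Sig) \<and>
     init A \<subseteq> states A \<and> fin A \<subseteq> states A"

type_synonym config = "nat \<times> nat list"

definition mpda_move :: "'a mpda \<Rightarrow> config \<Rightarrow> config \<Rightarrow> bool" where
  "mpda_move A c c' \<longleftrightarrow>
     (\<exists>q g g' q' alpha. (q, g, g', q') \<in> delta A \<and>
        c = (q, opt_list g @ alpha) \<and> c' = (q', opt_list g' @ alpha) \<and>
        opt_list g @ alpha \<noteq> [])"

definition initial_config :: "'a mpda \<Rightarrow> config \<Rightarrow> bool" where
  "initial_config A c \<longleftrightarrow> fst c \<in> init A \<and> (\<exists>g \<in> stack_syms A. snd c = [g])"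

definition final_config :: "'a mpda \<Rightarrow> config \<Rightarrow> bool" where
  "final_config A c \<longleftrightarrow> fst c \<in> fin A \<and> snd c = []"

definition accepting_run :: "'a mpda \<Rightarrow> config list \<Rightarrow> bool" where
  "accepting_run A cs \<longleftrightarrow> cs \<noteq> [] \<and> initial_config A (hd cs) \<and> final_config A (last cs) \<and>
     (\<forall>i. Suc i < length cs \<longrightarrow> mpda_move A (cs ! i) (cs ! Suc i))"

definition mpda_lang :: "'a mpda \<Rightarrow> 'a list set" where
  "mpda_lang A = {map (out A \<circ> fst) cs | cs. accepting_run A cs}"

text \<open>Nonterminals are natural numbers; a symbol is Inl (nonterminal) or Inr (terminal).\<close>

type_synonym 'a sym = "nat + 'a"

record 'a cfg =
  nonterms :: "nat set"
  prods :: "(nat \<times> 'a sym list) set"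
  start :: nat

definition wf_cfg :: "'a set \<Rightarrow> 'a cfg \<Rightarrow> bool" where
  "wf_cfg Sig G \<longleftrightarrow> finite (nonterms G) \<and> finite (prods G) \<and> start G \<in> nonterms G \<and>
     (\<forall>(X, rhs) \<in> prods G. X \<in> nonterms G \<and>
        (\<forall>s \<in> set rhs. case s of Inl Y \<Rightarrow> Y \<in> nonterms G | Inr a \<Rightarrow> a \<in> Sig))"

definition derive1 :: "'a cfg \<Rightarrow> 'a sym list \<Rightarrow> 'a sym list \<Rightarrow> bool" where
  "derive1 G u v \<longleftrightarrow> (\<exists>x y X rhs. (X, rhs) \<in> prods G \<and> u = x @ [Inl X] @ y \<and> v = x @ rhs @ y)"

definition cfg_lang :: "'a cfg \<Rightarrow> 'a list set" where
  "cfg_lang G = {w. (derive1 G)\<^sup>*\<^sup>* [Inl (start G)] (map Inr w)}"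

definition context_free :: "'a set \<Rightarrow> 'a list set \<Rightarrow> bool" where
  "context_free Sig L \<longleftrightarrow> (\<exists>G. wf_cfg Sig G \<and> cfg_lang G = L)"

end

theory Submission
  imports Defs "HOL-Library.Nat_Bijection"
begin

text \<open>
  Every accepting run makes at least one move, as it starts with one stack symbol and ends with
  none, and every configuration contributes a letter; so accepted words have length at least 2.
  The outputs of the runs from \<open>\<langle>p, X\<rangle>\<close> to \<open>\<langle>q, \<epsilon>\<rangle>\<close> are generated by the nonterminal
  \<open>[p, X, q]\<close> of the classical triple grammar, whose productions read off the first move: a pop
  gives \<open>[p, X, q] \<rightarrow> \<tau>(q)\<close>, a move ignoring the stack \<open>[p, X, q] \<rightarrow> \<tau>(p') [p', X, q]\<close>, and a
  push of \<open>Y\<close> gives \<open>[p, X, q] \<rightarrow> \<tau>(p') [p', Y, r] [r, X, q]\<close>.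

  Conversely, after removing \<open>\<epsilon>\<close>-productions a left-corner construction turns the grammar into
  a real-time generator: a push-down device on frames (grammar symbols, and items recording that
  a left corner of a nonterminal has been recognised) that in every step pops one frame, emits
  one letter and pushes boundedly many frames. An MPDA simulates it move by move, with the last
  emitted letter as output and a bounded top segment of the frame stack in its state, moving the
  rest of the frame stack to and from its own stack in blocks. The first letter is emitted by the
  initial state and every later letter by a move, which is why exactly the words of length at
  least 2 survive.
\<close>

section \<open>Derivation trees\<close>

definition concat_rel :: "('x \<Rightarrow> 'a list \<Rightarrow> bool) \<Rightarrow> 'x list \<Rightarrow> 'a list \<Rightarrow> bool" where
  "concat_rel R xs w \<longleftrightarrow> (\<exists>ws. w = concat ws \<and> list_all2 R xs ws)"

lemma concat_rel_Nil [simp]: "concat_rel R [] w \<longleftrightarrow> w = []"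
  by (auto simp: concat_rel_def)

lemma concat_rel_Cons: "concat_rel R (x # xs) w \<longleftrightarrow> (\<exists>v u. w = v @ u \<and> R x v \<and> concat_rel R xs u)"
proof
  assume "concat_rel R (x # xs) w"
  then show "\<exists>v u. w = v @ u \<and> R x v \<and> concat_rel R xs u"
    by (auto simp: concat_rel_def list_all2_Cons1) blast
next
  assume "\<exists>v u. w = v @ u \<and> R x v \<and> concat_rel R xs u"
  then obtain v ws where "w = v @ concat ws" "R x v" "list_all2 R xs ws"
    by (auto simp: concat_rel_def)
  then show "concat_rel R (x # xs) w"
    unfolding concat_rel_def by (intro exI[of _ "v # ws"]) simp
qed

lemma concat_rel_single [simp]: "concat_rel R [x] w \<longleftrightarrow> R x w"
  by (simp add: concat_rel_Cons)

lemma concat_rel_append: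
  "concat_rel R (xs @ ys) w \<longleftrightarrow> (\<exists>w1 w2. w = w1 @ w2 \<and> concat_rel R xs w1 \<and> concat_rel R ys w2)"
proof (induction xs arbitrary: w)
  case (Cons x xs)
  show ?case
    unfolding append_Cons concat_rel_Cons Cons.IH by (metis append.assoc)
qed simp

lemma concat_rel_map: "concat_rel R (map f xs) w \<longleftrightarrow> concat_rel (\<lambda>x. R (f x)) xs w"
  by (induction xs arbitrary: w) (simp_all add: concat_rel_Cons)

inductive yields :: "(nat \<times> 'a sym list) set \<Rightarrow> 'a sym \<Rightarrow> 'a list \<Rightarrow> bool" for P where
  yields_terminal: "yields P (Inr a) [a]"
| yields_prod: "(X, rhs) \<in> P \<Longrightarrow> list_all2 (yields P) rhs ws \<Longrightarrow> yields P (Inl X) (concat ws)"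

abbreviation yields_seq :: "(nat \<times> 'a sym list) set \<Rightarrow> 'a sym list \<Rightarrow> 'a list \<Rightarrow> bool" where
  "yields_seq P \<equiv> concat_rel (yields P)"

lemma yields_Inr_iff [simp]: "yields P (Inr a) w \<longleftrightarrow> w = [a]"
  by (auto elim: yields.cases intro: yields.intros)

lemma yields_Inl_iff: "yields P (Inl X) w \<longleftrightarrow> (\<exists>rhs. (X, rhs) \<in> P \<and> yields_seq P rhs w)"
proof
  assume "yields P (Inl X) w"
  then show "\<exists>rhs. (X, rhs) \<in> P \<and> yields_seq P rhs w"
    by (cases rule: yields.cases) (auto simp: concat_rel_def)
qed (auto intro: yields.intros simp: concat_rel_def)

lemma yields_InlI: "(X, rhs) \<in> P \<Longrightarrow> yields_seq P rhs w \<Longrightarrow> yields P (Inl X) w"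
  by (auto simp: yields_Inl_iff)

lemma yields_seq_map_Inr: "yields_seq P (map Inr w) w"
  by (induction w) (auto simp: concat_rel_Cons)

lemma derive1_context: "derive1 G u v \<Longrightarrow> derive1 G (x @ u @ y) (x @ v @ y)"
  unfolding derive1_def by (metis append.assoc)

lemma derives_context: "(derive1 G)\<^sup>*\<^sup>* u v \<Longrightarrow> (derive1 G)\<^sup>*\<^sup>* (x @ u @ y) (x @ v @ y)"
  by (induction rule: rtranclp_induct) (auto intro: rtranclp.rtrancl_into_rtrancl derive1_context)

lemma derives_append:
  assumes "(derive1 G)\<^sup>*\<^sup>* u u'" and "(derive1 G)\<^sup>*\<^sup>* v v'"
  shows "(derive1 G)\<^sup>*\<^sup>* (u @ v) (u' @ v')"
  using derives_context[OF assms(1), of "[]" v] derives_context[OF assms(2), of u' "[]"] by simp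

lemma yields_imp_derives: "yields (prods G) s w \<Longrightarrow> (derive1 G)\<^sup>*\<^sup>* [s] (map Inr w)"
proof (induction rule: yields.induct)
  case (yields_prod X rhs ws)
  from yields_prod.IH have "(derive1 G)\<^sup>*\<^sup>* rhs (map Inr (concat ws))"
  proof (induction rule: list_all2_induct)
    case (Cons s rhs w ws)
    then show ?case using derives_append[of G "[s]" "map Inr w" rhs "map Inr (concat ws)"] by simp
  qed simp
  moreover have "derive1 G [Inl X] rhs"
    unfolding derive1_def using yields_prod.hyps(1) by force
  ultimately show ?case by (meson converse_rtranclp_into_rtranclp)
qed simp

lemma derives_imp_yields_seq: "(derive1 G)\<^sup>*\<^sup>* ss (map Inr w) \<Longrightarrow> yields_seq (prods G) ss w"
proof (induction rule: converse_rtranclp_induct)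
  case base
  show ?case by (rule yields_seq_map_Inr)
next
  case (step u v)
  then obtain x y X rhs where "(X, rhs) \<in> prods G" "u = x @ [Inl X] @ y" "v = x @ rhs @ y"
    unfolding derive1_def by blast
  moreover from step.IH this(3) obtain w1 w2 w3 where
    "w = w1 @ w2 @ w3" "yields_seq (prods G) x w1" "yields_seq (prods G) rhs w2" "yields_seq (prods G) y w3"
    by (auto simp: concat_rel_append)
  ultimately have "yields_seq (prods G) (Inl X # y) (w2 @ w3)"
    by (auto simp: concat_rel_Cons yields_Inl_iff)
  with \<open>u = _\<close> \<open>w = _\<close> \<open>yields_seq (prods G) x w1\<close> show ?case
    by (auto simp: concat_rel_append)
qed

lemma cfg_lang_eq_yields: "cfg_lang G = {w. yields (prods G) (Inl (start G)) w}"
  unfolding cfg_lang_def using yields_imp_derives derives_imp_yields_seq concat_rel_single by fastforce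

section \<open>Moore push-down automata over arbitrary types\<close>

record ('q, 'g, 'a) pda =
  pstates :: "'q set"
  psyms :: "'g set"
  ptrans :: "('q \<times> 'g option \<times> 'g option \<times> 'q) set"
  pout :: "'q \<Rightarrow> 'a"
  pinit :: "'q set"
  pfin :: "'q set"

definition list_of_opt :: "'g option \<Rightarrow> 'g list" where
  "list_of_opt x = (case x of None \<Rightarrow> [] | Some g \<Rightarrow> [g])"

lemma list_of_opt_simps [simp]: "list_of_opt None = []" "list_of_opt (Some g) = [g]"
  by (simp_all add: list_of_opt_def)

lemma map_list_of_opt: "map f (list_of_opt g) = list_of_opt (map_option f g)"
  by (cases g) simp_all

definition pmove :: "('q, 'g, 'a) pda \<Rightarrow> 'q \<times> 'g list \<Rightarrow> 'q \<times> 'g list \<Rightarrow> bool" where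
  "pmove B c c' \<longleftrightarrow> (\<exists>q g g' q' al. (q, g, g', q') \<in> ptrans B \<and>
     c = (q, list_of_opt g @ al) \<and> c' = (q', list_of_opt g' @ al) \<and> list_of_opt g @ al \<noteq> [])"

lemma pmoveI:
  "(q, g, g', q') \<in> ptrans B \<Longrightarrow> list_of_opt g @ al \<noteq> [] \<Longrightarrow>
   pmove B (q, list_of_opt g @ al) (q', list_of_opt g' @ al)"
  unfolding pmove_def by blast

inductive prun :: "('q, 'g, 'a) pda \<Rightarrow> 'q \<times> 'g list \<Rightarrow> 'q \<times> 'g list \<Rightarrow> 'a list \<Rightarrow> bool" for B where
  prun_refl: "prun B c c []"
| prun_step: "pmove B c d \<Longrightarrow> prun B d e w \<Longrightarrow> prun B c e (pout B (fst d) # w)"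

definition plang :: "('q, 'g, 'a) pda \<Rightarrow> 'a list set" where
  "plang B = {pout B q # w | q g q' w.
     q \<in> pinit B \<and> g \<in> psyms B \<and> q' \<in> pfin B \<and> prun B (q, [g]) (q', []) w}"

definition pda_of_mpda :: "'a mpda \<Rightarrow> (nat, nat, 'a) pda" where
  "pda_of_mpda A = \<lparr>pstates = states A, psyms = stack_syms A, ptrans = delta A, pout = out A,
     pinit = init A, pfin = fin A\<rparr>"

lemma pda_of_mpda_simps [simp]:
  "pstates (pda_of_mpda A) = states A" "psyms (pda_of_mpda A) = stack_syms A"
  "ptrans (pda_of_mpda A) = delta A" "pout (pda_of_mpda A) = out A"
  "pinit (pda_of_mpda A) = init A" "pfin (pda_of_mpda A) = fin A"
  by (simp_all add: pda_of_mpda_def)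

lemma mpda_move_eq_pmove: "mpda_move A = pmove (pda_of_mpda A)"
proof -
  have "opt_list = list_of_opt"
    by (simp add: fun_eq_iff opt_list_def list_of_opt_def)
  then show ?thesis
    by (simp add: fun_eq_iff mpda_move_def pmove_def)
qed

lemma successively_iff_nth:
  "successively R xs \<longleftrightarrow> (\<forall>i. Suc i < length xs \<longrightarrow> R (xs ! i) (xs ! Suc i))"
proof (induction R xs rule: successively.induct)
  case (3 R x y xs)
  show ?case
    unfolding successively.simps 3
    by (auto simp: All_less_Suc2[where P = "\<lambda>i. R (_ ! i) _"] nth_Cons split: nat.splits)
qed simp_all

lemma prun_iff_successively:
  "prun B c e w \<longleftrightarrow> (\<exists>cs. successively (pmove B) (c # cs) \<and> last (c # cs) = e \<and> w = map (pout B \<circ> fst) cs)"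
proof
  assume "prun B c e w"
  then show "\<exists>cs. successively (pmove B) (c # cs) \<and> last (c # cs) = e \<and> w = map (pout B \<circ> fst) cs"
  proof (induction rule: prun.induct)
    case (prun_refl c)
    show ?case by (intro exI[of _ "[]"]) simp
  next
    case (prun_step c d e w)
    then obtain cs where "successively (pmove B) (d # cs)" "last (d # cs) = e" "w = map (pout B \<circ> fst) cs"
      by blast
    with prun_step.hyps(1) show ?case by (intro exI[of _ "d # cs"]) simp
  qed
next
  assume "\<exists>cs. successively (pmove B) (c # cs) \<and> last (c # cs) = e \<and> w = map (pout B \<circ> fst) cs"
  then obtain cs where "successively (pmove B) (c # cs)" "last (c # cs) = e" "w = map (pout B \<circ> fst) cs"
    by blast
  then show "prun B c e w"
  proof (induction cs arbitrary: c w)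
    case Nil
    then show ?case by (simp add: prun_refl)
  next
    case (Cons d cs)
    then have "pmove B c d" "prun B d e (map (pout B \<circ> fst) cs)"
      using Cons.IH[of d "map (pout B \<circ> fst) cs"] by simp_all
    then have "prun B c e (pout B (fst d) # map (pout B \<circ> fst) cs)"
      by (rule prun_step)
    with Cons.prems(3) show ?case by (simp add: comp_def)
  qed
qed

lemma accepting_run_Cons_iff:
  "accepting_run A (c # cs) \<longleftrightarrow>
     initial_config A c \<and> final_config A (last (c # cs)) \<and> successively (pmove (pda_of_mpda A)) (c # cs)"
  by (simp only: accepting_run_def successively_iff_nth mpda_move_eq_pmove) simp

lemma initial_config_iff: "initial_config A c \<longleftrightarrow> (\<exists>q g. c = (q, [g]) \<and> q \<in> init A \<and> g \<in> stack_syms A)"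
  by (cases c) (auto simp: initial_config_def)

lemma final_config_iff: "final_config A c \<longleftrightarrow> (\<exists>q. c = (q, []) \<and> q \<in> fin A)"
  by (cases c) (auto simp: final_config_def)

lemma mpda_lang_eq_plang: "mpda_lang A = plang (pda_of_mpda A)"
proof (intro set_eqI)
  fix w
  have "w \<in> mpda_lang A \<longleftrightarrow>
      (\<exists>c cs. accepting_run A (c # cs) \<and> w = out A (fst c) # map (out A \<circ> fst) cs)"
  proof
    assume "w \<in> mpda_lang A"
    then obtain cs where "accepting_run A cs" "w = map (out A \<circ> fst) cs"
      unfolding mpda_lang_def by blast
    then show "\<exists>c cs. accepting_run A (c # cs) \<and> w = out A (fst c) # map (out A \<circ> fst) cs"
      by (metis accepting_run_def comp_apply list.exhaust list.map(2))
  qed (force simp: mpda_lang_def)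
  also have "\<dots> \<longleftrightarrow> (\<exists>c e w'. initial_config A c \<and> final_config A e \<and>
      prun (pda_of_mpda A) c e w' \<and> w = out A (fst c) # w')"
    unfolding accepting_run_Cons_iff prun_iff_successively pda_of_mpda_simps by blast
  also have "\<dots> \<longleftrightarrow> w \<in> plang (pda_of_mpda A)"
    unfolding plang_def initial_config_iff final_config_iff by auto
  finally show "w \<in> mpda_lang A \<longleftrightarrow> w \<in> plang (pda_of_mpda A)" .
qed

lemma prun_trans: "prun B c d w1 \<Longrightarrow> prun B d e w2 \<Longrightarrow> prun B c e (w1 @ w2)"
  by (induction rule: prun.induct) (auto intro: prun.intros)

lemma prun_single: "pmove B c d \<Longrightarrow> prun B c d [pout B (fst d)]"
  by (auto intro: prun.intros)

lemma prun_Nil_iff [simp]: "prun B c e [] \<longleftrightarrow> c = e"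
  by (auto elim: prun.cases intro: prun_refl)

lemma prun_from_empty_stack: "prun B (p, []) (q, al) w \<Longrightarrow> q = p \<and> al = [] \<and> w = []"
  by (erule prun.cases) (auto simp: pmove_def)

lemma prun_append_stack: "prun B (p, al) (q, be) w \<Longrightarrow> prun B (p, al @ ga) (q, be @ ga) w"
proof (induction "(p, al)" "(q, be)" w arbitrary: p al rule: prun.induct)
  case prun_refl
  show ?case by (rule prun.prun_refl)
next
  case (prun_step d w)
  from prun_step.hyps(1) have "pmove B (p, al @ ga) (fst d, snd d @ ga)"
    unfolding pmove_def by fastforce
  with prun_step.hyps(3)[of "fst d" "snd d"] show ?case
    by (metis fst_conv prod.collapse prun.prun_step)
qed

lemma prun_split_stack:
  assumes "prun B (p, al @ ga) (q, []) w" and "al \<noteq> []"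
  shows "\<exists>r w1 w2. prun B (p, al) (r, []) w1 \<and> prun B (r, ga) (q, []) w2 \<and> w = w1 @ w2 \<and> w1 \<noteq> []"
  using assms
proof (induction "(p, al @ ga)" "(q, [] :: 'b list)" w arbitrary: p al rule: prun.induct)
  case prun_refl
  then show ?case by simp
next
  case (prun_step d w)
  from prun_step.hyps(1) obtain g g' p' rest where
    trans: "(p, g, g', p') \<in> ptrans B" and
    stack: "al @ ga = list_of_opt g @ rest" and d: "d = (p', list_of_opt g' @ rest)"
    unfolding pmove_def by auto
  obtain al1 where al: "al = list_of_opt g @ al1" and rest: "rest = al1 @ ga"
    using stack prun_step.prems by (cases g; cases al) auto
  have move: "pmove B (p, al) (p', list_of_opt g' @ al1)"
    using pmoveI[OF trans] prun_step.prems al by auto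
  show ?case
  proof (cases "list_of_opt g' @ al1 = []")
    case True
    with d rest prun_step.hyps(2) have "prun B (p', ga) (q, []) w" by simp
    with prun_single[OF move] True d show ?thesis by fastforce
  next
    case False
    with prun_step.hyps(3)[of p' "list_of_opt g' @ al1"] d rest obtain r w1 w2 where
      "prun B (p', list_of_opt g' @ al1) (r, []) w1" "prun B (r, ga) (q, []) w2" "w = w1 @ w2"
      by auto
    with prun.prun_step[OF move] d show ?thesis by fastforce
  qed
qed

lemma prun_target_in_pstates:
  assumes "prun B c e w" and "w \<noteq> []" and "\<forall>(q, g, g', q') \<in> ptrans B. q' \<in> pstates B"
  shows "fst e \<in> pstates B"
  using assms(1,2)
proof (induction rule: prun.induct)
  case (prun_step c d e w)
  show ?case
  proof (cases "w = []")
    case True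
    with prun_step.hyps(2) have "d = e" by simp
    with prun_step.hyps(1) assms(3) show ?thesis by (auto simp: pmove_def)
  qed (rule prun_step.IH)
qed simp

lemma plang_length_ge_2: "w \<in> plang B \<Longrightarrow> 2 \<le> length w"
  unfolding plang_def by (auto simp: Suc_le_eq elim: prun.cases)

section \<open>Renaming states and stack symbols\<close>

definition wf_pda :: "'a set \<Rightarrow> ('q, 'g, 'a) pda \<Rightarrow> bool" where
  "wf_pda Sig B \<longleftrightarrow>
     finite (pstates B) \<and> finite (psyms B) \<and>
     (\<forall>(q, g, g', q') \<in> ptrans B. q \<in> pstates B \<and> q' \<in> pstates B \<and>
        set_option g \<subseteq> psyms B \<and> set_option g' \<subseteq> psyms B \<and> (g = None \<or> g' = None)) \<and>
     (\<forall>q \<in> pstates B. pout B q \<in> Sig) \<and> pinit B \<subseteq> pstates B \<and> pfin B \<subseteq> pstates B"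

lemma wf_pda_trans:
  assumes "wf_pda Sig B" and "(q, g, g', q') \<in> ptrans B"
  shows "q \<in> pstates B \<and> q' \<in> pstates B \<and> set_option g \<subseteq> psyms B \<and> set_option g' \<subseteq> psyms B \<and>
    (g = None \<or> g' = None)"
  using assms unfolding wf_pda_def by fastforce

definition map_config :: "('q \<Rightarrow> 'q') \<Rightarrow> ('g \<Rightarrow> 'g') \<Rightarrow> 'q \<times> 'g list \<Rightarrow> 'q' \<times> 'g' list" where
  "map_config hq hg c = (hq (fst c), map hg (snd c))"

context
  fixes B :: "('q, 'g, 'a) pda" and B' :: "('q', 'g', 'a) pda" and hq :: "'q \<Rightarrow> 'q'" and hg :: "'g \<Rightarrow> 'g'"
  assumes map_trans: "\<And>q g g' q'. (q, g, g', q') \<in> ptrans B \<Longrightarrow>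
      (hq q, map_option hg g, map_option hg g', hq q') \<in> ptrans B' \<and> pout B' (hq q') = pout B q'"
begin

lemma pmove_map_config:
  assumes "pmove B c d"
  shows "pmove B' (map_config hq hg c) (map_config hq hg d)"
proof -
  from assms obtain q g g' q' al where "(q, g, g', q') \<in> ptrans B" "list_of_opt g @ al \<noteq> []"
    "c = (q, list_of_opt g @ al)" "d = (q', list_of_opt g' @ al)"
    unfolding pmove_def by blast
  with pmoveI[of "hq q" "map_option hg g" "map_option hg g'" "hq q'" B' "map hg al"] map_trans
  show ?thesis
    by (simp add: map_config_def map_list_of_opt[symmetric])
qed

lemma prun_map_config: "prun B c e w \<Longrightarrow> prun B' (map_config hq hg c) (map_config hq hg e) w"
proof (induction rule: prun.induct)
  case (prun_step c d e w)
  from prun_step.hyps(1) obtain q g g' where "(q, g, g', fst d) \<in> ptrans B"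
    unfolding pmove_def by auto
  then have "pout B' (hq (fst d)) = pout B (fst d)"
    using map_trans by blast
  moreover have "prun B' (map_config hq hg c) (map_config hq hg e) (pout B' (fst (map_config hq hg d)) # w)"
    using pmove_map_config[OF prun_step.hyps(1)] prun_step.IH by (rule prun.prun_step)
  ultimately show ?case
    by (simp add: map_config_def)
qed (rule prun_refl)

lemma plang_map_subset:
  assumes "\<And>q. q \<in> pinit B \<Longrightarrow> hq q \<in> pinit B' \<and> pout B' (hq q) = pout B q"
    and "hg ` psyms B \<subseteq> psyms B'" and "hq ` pfin B \<subseteq> pfin B'"
  shows "plang B \<subseteq> plang B'"
proof
  fix w assume "w \<in> plang B"
  then obtain q g q' w' where "w = pout B q # w'" "q \<in> pinit B" "g \<in> psyms B" "q' \<in> pfin B"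
    "prun B (q, [g]) (q', []) w'"
    unfolding plang_def by blast
  moreover from prun_map_config[OF this(5)] have "prun B' (hq q, [hg g]) (hq q', []) w'"
    by (simp add: map_config_def)
  ultimately have "w = pout B' (hq q) # w'" "hq q \<in> pinit B'" "hg g \<in> psyms B'" "hq q' \<in> pfin B'"
    "prun B' (hq q, [hg g]) (hq q', []) w'"
    using assms by auto
  then show "w \<in> plang B'"
    unfolding plang_def by blast
qed

end

definition mpda_of_pda :: "('q, 'g, 'a) pda \<Rightarrow> ('q \<Rightarrow> nat) \<Rightarrow> ('g \<Rightarrow> nat) \<Rightarrow> 'a mpda" where
  "mpda_of_pda B hq hg = \<lparr>states = hq ` pstates B, stack_syms = hg ` psyms B,
     delta = (\<lambda>(q, g, g', q'). (hq q, map_option hg g, map_option hg g', hq q')) ` ptrans B,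
     out = pout B \<circ> inv_into (pstates B) hq, init = hq ` pinit B, fin = hq ` pfin B\<rparr>"

lemma wf_mpda_of_pda:
  assumes wf: "wf_pda Sig B" and hq: "inj_on hq (pstates B)"
  shows "wf_mpda Sig (mpda_of_pda B hq hg)"
  using wf unfolding wf_mpda_def wf_pda_def
  by (auto simp: mpda_of_pda_def inv_into_f_f[OF hq] dest!: wf_pda_trans[OF wf] split: option.splits)

lemma mpda_lang_mpda_of_pda:
  assumes wf: "wf_pda Sig B" and hq: "inj_on hq (pstates B)" and hg: "inj_on hg (psyms B)"
  shows "mpda_lang (mpda_of_pda B hq hg) = plang B"
proof -
  let ?A = "mpda_of_pda B hq hg"
  have out: "out ?A (hq q) = pout B q" if "q \<in> pstates B" for q
    using hq that by (simp add: mpda_of_pda_def)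
  have "plang B \<subseteq> plang (pda_of_mpda ?A)"
  proof (rule plang_map_subset)
    show "(hq q, map_option hg g, map_option hg g', hq q') \<in> ptrans (pda_of_mpda ?A) \<and>
        pout (pda_of_mpda ?A) (hq q') = pout B q'" if "(q, g, g', q') \<in> ptrans B" for q g g' q'
      using that wf_pda_trans[OF wf that] out by (force simp: mpda_of_pda_def)
    show "hq q \<in> pinit (pda_of_mpda ?A) \<and> pout (pda_of_mpda ?A) (hq q) = pout B q" if "q \<in> pinit B" for q
      using that wf out unfolding wf_pda_def by (auto simp: mpda_of_pda_def)
  qed (auto simp: mpda_of_pda_def)
  moreover have "plang (pda_of_mpda ?A) \<subseteq> plang B"
  proof (rule plang_map_subset[where hq = "inv_into (pstates B) hq" and hg = "inv_into (psyms B) hg"])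
    have "inv_into (psyms B) hg ` hg ` psyms B = psyms B"
      using hg by (simp add: image_image)
    then show "inv_into (psyms B) hg ` psyms (pda_of_mpda ?A) \<subseteq> psyms B"
      by (simp add: mpda_of_pda_def)
  next
    fix q g g' q' assume "(q, g, g', q') \<in> ptrans (pda_of_mpda ?A)"
    then obtain p h h' p' where t: "(p, h, h', p') \<in> ptrans B"
      and eqs: "q = hq p" "g = map_option hg h" "g' = map_option hg h'" "q' = hq p'"
      by (auto simp: mpda_of_pda_def)
    have inv_hg: "map_option (inv_into (psyms B) hg) (map_option hg k) = k" if "set_option k \<subseteq> psyms B" for k
      using that by (cases k) (simp_all add: inv_into_f_f[OF hg])
    from wf_pda_trans[OF wf t] t eqs
    show "(inv_into (pstates B) hq q, map_option (inv_into (psyms B) hg) g,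
        map_option (inv_into (psyms B) hg) g', inv_into (pstates B) hq q') \<in> ptrans B \<and>
        pout B (inv_into (pstates B) hq q') = pout (pda_of_mpda ?A) q'"
      by (simp add: inv_into_f_f[OF hq] inv_hg mpda_of_pda_def)
  qed (use wf hq in \<open>auto simp: mpda_of_pda_def wf_pda_def subset_iff\<close>)
  ultimately show ?thesis
    by (simp add: mpda_lang_eq_plang)
qed

lemma wf_pda_imp_mpda:
  fixes B :: "('q, 'g, 'a) pda"
  assumes "wf_pda Sig B"
  shows "\<exists>A. wf_mpda Sig A \<and> mpda_lang A = plang B"
proof -
  from assms have "finite (pstates B)" "finite (psyms B)"
    by (simp_all add: wf_pda_def)
  then obtain hq :: "'q \<Rightarrow> nat" and hg :: "'g \<Rightarrow> nat" where "inj_on hq (pstates B)" "inj_on hg (psyms B)"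
    by (meson finite_imp_inj_to_nat_seg)
  with assms show ?thesis
    using wf_mpda_of_pda mpda_lang_mpda_of_pda by blast
qed

section \<open>From Moore push-down automata to grammars\<close>

text \<open>The nonterminal \<open>triple p X q\<close> generates the outputs of the runs from \<open>\<langle>p, X\<rangle>\<close> to
  \<open>\<langle>q, \<epsilon>\<rangle>\<close>, excluding the output of \<open>p\<close>; the successor keeps \<open>0\<close> free for the start symbol.\<close>

definition triple :: "nat \<Rightarrow> nat \<Rightarrow> nat \<Rightarrow> nat" where
  "triple p X q = Suc (prod_encode (p, prod_encode (X, q)))"

lemma triple_eq_iff [simp]: "triple p X q = triple p' X' q' \<longleftrightarrow> p = p' \<and> X = X' \<and> q = q'"
  by (auto simp: triple_def prod_encode_eq)

lemma triple_neq_0 [simp]: "triple p X q \<noteq> 0"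
  by (simp add: triple_def)

inductive_set triple_prods :: "'a mpda \<Rightarrow> (nat \<times> 'a sym list) set" for A where
  triple_start: "p \<in> init A \<Longrightarrow> X \<in> stack_syms A \<Longrightarrow> q \<in> fin A \<Longrightarrow>
    (0, [Inr (out A p), Inl (triple p X q)]) \<in> triple_prods A"
| triple_pop: "(p, Some X, None, q) \<in> delta A \<Longrightarrow>
    (triple p X q, [Inr (out A q)]) \<in> triple_prods A"
| triple_ignore: "(p, None, None, p') \<in> delta A \<Longrightarrow> X \<in> stack_syms A \<Longrightarrow> q \<in> states A \<Longrightarrow>
    (triple p X q, [Inr (out A p'), Inl (triple p' X q)]) \<in> triple_prods A"
| triple_push: "(p, None, Some Y, p') \<in> delta A \<Longrightarrow> X \<in> stack_syms A \<Longrightarrow> q \<in> states A \<Longrightarrow> r \<in> states A \<Longrightarrow>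
    (triple p X q, [Inr (out A p'), Inl (triple p' Y r), Inl (triple r X q)]) \<in> triple_prods A"

definition triple_cfg :: "'a mpda \<Rightarrow> 'a cfg" where
  "triple_cfg A = \<lparr>nonterms = insert 0 ((\<lambda>(p, X, q). triple p X q) ` (states A \<times> stack_syms A \<times> states A)),
     prods = triple_prods A, start = 0\<rparr>"

lemma wf_mpda_trans:
  assumes "wf_mpda Sig A" and "(q, g, g', q') \<in> delta A"
  shows "q \<in> states A \<and> q' \<in> states A \<and> set_option g \<subseteq> stack_syms A \<and> set_option g' \<subseteq> stack_syms A \<and>
    (g = None \<or> g' = None)"
  using assms unfolding wf_mpda_def by fastforce

lemma yields_triple_imp_prun:
  "yields (triple_prods A) (Inl (triple p X q)) w \<Longrightarrow> prun (pda_of_mpda A) (p, [X]) (q, []) w"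
proof (induction "Inl (triple p X q) :: 'a sym" w arbitrary: p X q rule: yields.induct)
  case (yields_prod rhs ws)
  from yields_prod.hyps(1) consider
      (pop) "rhs = [Inr (out A q)]" "(p, Some X, None, q) \<in> delta A"
    | (ignore) p' where "rhs = [Inr (out A p'), Inl (triple p' X q)]" "(p, None, None, p') \<in> delta A"
    | (push) p' Y r where "rhs = [Inr (out A p'), Inl (triple p' Y r), Inl (triple r X q)]"
        "(p, None, Some Y, p') \<in> delta A"
    by cases auto
  then show ?case
  proof cases
    case pop
    with yields_prod.hyps(2) have "ws = [[out A q]]"
      by (auto simp: list_all2_Cons1)
    moreover from pop(2) have "pmove (pda_of_mpda A) (p, [X]) (q, [])"
      using pmoveI[of p "Some X" None q "pda_of_mpda A" "[]"] by simp
    ultimately show ?thesis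
      using prun_single by fastforce
  next
    case (ignore p')
    with yields_prod.hyps(2) obtain w' where
      "ws = [[out A p'], w']" "prun (pda_of_mpda A) (p', [X]) (q, []) w'"
      by (auto simp: list_all2_Cons1)
    moreover from ignore(2) have "pmove (pda_of_mpda A) (p, [X]) (p', [X])"
      using pmoveI[of p None None p' "pda_of_mpda A" "[X]"] by simp
    ultimately show ?thesis
      using prun.prun_step by fastforce
  next
    case (push p' Y r)
    with yields_prod.hyps(2) obtain w1 w2 where ws: "ws = [[out A p'], w1, w2]"
      "prun (pda_of_mpda A) (p', [Y]) (r, []) w1" "prun (pda_of_mpda A) (r, [X]) (q, []) w2"
      by (auto simp: list_all2_Cons1)
    then have "prun (pda_of_mpda A) (p', [Y, X]) (q, []) (w1 @ w2)"
      using prun_append_stack[OF ws(2), of "[X]"] prun_trans by fastforce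
    moreover from push(2) have "pmove (pda_of_mpda A) (p, [X]) (p', [Y, X])"
      using pmoveI[of p None "Some Y" p' "pda_of_mpda A" "[X]"] by simp
    ultimately show ?thesis
      using prun.prun_step ws(1) by fastforce
  qed
qed

lemma prun_target_in_states:
  assumes "wf_mpda Sig A" and "prun (pda_of_mpda A) c (q, al) w" and "w \<noteq> []"
  shows "q \<in> states A"
  using prun_target_in_pstates[OF assms(2,3)] wf_mpda_trans[OF assms(1)] by fastforce

lemma pmove_from_single_cases [consumes 2, case_names pop ignore push]:
  assumes wf: "wf_mpda Sig A" and move: "pmove (pda_of_mpda A) (p, [X]) d"
  obtains (pop) q where "(p, Some X, None, q) \<in> delta A" "d = (q, [])"
  | (ignore) p' where "(p, None, None, p') \<in> delta A" "d = (p', [X])"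
  | (push) p' Y where "(p, None, Some Y, p') \<in> delta A" "Y \<in> stack_syms A" "d = (p', [Y, X])"
proof -
  from move obtain g g' p' al where trans: "(p, g, g', p') \<in> delta A"
    and stack: "[X] = list_of_opt g @ al" and d: "d = (p', list_of_opt g' @ al)"
    unfolding pmove_def by auto
  from wf_mpda_trans[OF wf trans] have "set_option g' \<subseteq> stack_syms A" "g = None \<or> g' = None"
    by simp_all
  show thesis
  proof (cases g)
    case (Some Z)
    with stack d trans \<open>g = None \<or> g' = None\<close> show thesis
      by (intro pop[of p']) auto
  next
    case None
    with stack d trans \<open>set_option g' \<subseteq> stack_syms A\<close> show thesis
      by (cases g') (auto intro: ignore push)
  qed
qed

lemma prun_imp_yields_triple:
  assumes wf: "wf_mpda Sig A"
  shows "prun (pda_of_mpda A) (p, [X]) (q, []) w \<Longrightarrow> X \<in> stack_syms A \<Longrightarrow>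
    yields (triple_prods A) (Inl (triple p X q)) w"
proof (induction "length w" arbitrary: p X q w rule: less_induct)
  case less
  let ?B = "pda_of_mpda A"
  from less.prems(1) obtain d w' where
    move: "pmove ?B (p, [X]) d" and run: "prun ?B d (q, []) w'" and w: "w = out A (fst d) # w'"
    by (cases rule: prun.cases) auto
  have "q \<in> states A"
    using prun_target_in_states[OF wf less.prems(1)] w by simp
  from wf move show ?case
  proof (cases rule: pmove_from_single_cases)
    case (pop p')
    with run have "q = p'" "w' = []"
      by (auto dest: prun_from_empty_stack)
    with pop w show ?thesis
      by (auto intro: yields_InlI triple_pop)
  next
    case (ignore p')
    with run w less.hyps less.prems(2) have "yields (triple_prods A) (Inl (triple p' X q)) w'"
      by auto
    with ignore w less.prems(2) \<open>q \<in> states A\<close> show ?thesis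
      by (auto intro!: yields_InlI triple_ignore simp: concat_rel_Cons)
  next
    case (push p' Y)
    with run obtain r w1 w2 where run1: "prun ?B (p', [Y]) (r, []) w1"
      and run2: "prun ?B (r, [X]) (q, []) w2" and "w' = w1 @ w2" and "w1 \<noteq> []"
      using prun_split_stack[of ?B p' "[Y]" "[X]" q w'] by auto
    moreover from wf run1 \<open>w1 \<noteq> []\<close> have "r \<in> states A"
      by (rule prun_target_in_states)
    ultimately have "yields (triple_prods A) (Inl (triple p' Y r)) w1"
      "yields (triple_prods A) (Inl (triple r X q)) w2"
      using less.hyps less.prems(2) push(2) w by auto
    moreover from push less.prems(2) \<open>q \<in> states A\<close> \<open>r \<in> states A\<close>
    have "(triple p X q, [Inr (out A p'), Inl (triple p' Y r), Inl (triple r X q)]) \<in> triple_prods A"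
      by (auto intro: triple_push)
    ultimately show ?thesis
      using w push(3) \<open>w' = w1 @ w2\<close> by (auto intro!: yields_InlI simp: concat_rel_Cons) blast
  qed
qed

lemma cfg_lang_triple_cfg:
  assumes "wf_mpda Sig A"
  shows "cfg_lang (triple_cfg A) = mpda_lang A"
proof -
  have "yields (triple_prods A) (Inl 0) w \<longleftrightarrow> w \<in> plang (pda_of_mpda A)" for w
  proof
    assume "yields (triple_prods A) (Inl 0) w"
    then obtain rhs where "(0, rhs) \<in> triple_prods A" "yields_seq (triple_prods A) rhs w"
      by (auto simp: yields_Inl_iff)
    then show "w \<in> plang (pda_of_mpda A)"
      by cases (auto simp: plang_def concat_rel_Cons dest!: yields_triple_imp_prun)
  next
    assume "w \<in> plang (pda_of_mpda A)"
    then obtain p X q w' where "w = out A p # w'" "p \<in> init A" "X \<in> stack_syms A" "q \<in> fin A"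
      "prun (pda_of_mpda A) (p, [X]) (q, []) w'"
      unfolding plang_def by auto
    with prun_imp_yields_triple[OF assms] triple_start[of p A X q] show "yields (triple_prods A) (Inl 0) w"
      by (auto simp: yields_Inl_iff concat_rel_Cons)
  qed
  then show ?thesis
    by (auto simp: cfg_lang_eq_yields triple_cfg_def mpda_lang_eq_plang)
qed

lemma wf_cfg_triple_cfg:
  assumes wf: "wf_mpda Sig A"
  shows "wf_cfg Sig (triple_cfg A)"
proof -
  let ?N = "nonterms (triple_cfg A)"
  let ?S = "Inl ` ?N \<union> Inr ` out A ` states A"
  have fin: "finite (states A)" "finite (stack_syms A)" and sub: "init A \<subseteq> states A" "fin A \<subseteq> states A"
    and out: "out A ` states A \<subseteq> Sig"
    using wf by (auto simp: wf_mpda_def)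
  then have "finite ?N" by (simp add: triple_cfg_def)
  have "0 \<in> ?N" by (simp add: triple_cfg_def)
  have triple_N: "triple p X q \<in> ?N" if "p \<in> states A" "X \<in> stack_syms A" "q \<in> states A" for p X q
    using that by (force simp: triple_cfg_def)
  have prods: "triple_prods A \<subseteq> ?N \<times> {xs. set xs \<subseteq> ?S \<and> length xs \<le> 3}"
  proof (rule subrelI)
    fix X rhs assume "(X, rhs) \<in> triple_prods A"
    then show "(X, rhs) \<in> ?N \<times> {xs. set xs \<subseteq> ?S \<and> length xs \<le> 3}"
      by cases (use sub \<open>0 \<in> ?N\<close> in \<open>auto simp: image_iff intro: triple_N dest!: wf_mpda_trans[OF wf]\<close>)
  qed
  moreover have "finite (?N \<times> {xs. set xs \<subseteq> ?S \<and> length xs \<le> 3})"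
    using \<open>finite ?N\<close> fin by (intro finite_cartesian_product finite_lists_length_le) auto
  ultimately have "finite (triple_prods A)"
    by (rule finite_subset)
  moreover have "X \<in> ?N \<and> (\<forall>s \<in> set rhs. case s of Inl Y \<Rightarrow> Y \<in> ?N | Inr a \<Rightarrow> a \<in> Sig)"
    if "(X, rhs) \<in> triple_prods A" for X rhs
    using prods that out by (fastforce split: sum.splits)
  moreover have "prods (triple_cfg A) = triple_prods A" "start (triple_cfg A) = 0"
    by (simp_all add: triple_cfg_def)
  ultimately show ?thesis
    using \<open>finite ?N\<close> \<open>0 \<in> ?N\<close> unfolding wf_cfg_def by auto
qed

lemma mpda_lang_context_free: "wf_mpda Sig A \<Longrightarrow> context_free Sig (mpda_lang A)"
  using wf_cfg_triple_cfg cfg_lang_triple_cfg unfolding context_free_def by metis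

section \<open>Elimination of \<open>\<epsilon>\<close>-productions\<close>

inductive drop_nullable :: "(nat \<times> 'a sym list) set \<Rightarrow> 'a sym list \<Rightarrow> 'a sym list \<Rightarrow> bool" for P where
  drop_nullable_Nil: "drop_nullable P [] []"
| drop_nullable_keep: "drop_nullable P al al' \<Longrightarrow> drop_nullable P (s # al) (s # al')"
| drop_nullable_drop: "yields P s [] \<Longrightarrow> drop_nullable P al al' \<Longrightarrow> drop_nullable P (s # al) al'"

definition eps_free :: "(nat \<times> 'a sym list) set \<Rightarrow> (nat \<times> 'a sym list) set" where
  "eps_free P = {(X, al') | X al al'. (X, al) \<in> P \<and> drop_nullable P al al' \<and> al' \<noteq> []}"

definition nonempty_rhs :: "(nat \<times> 'a sym list) set \<Rightarrow> bool" where
  "nonempty_rhs P \<longleftrightarrow> (\<forall>(X, al) \<in> P. al \<noteq> [])"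

lemma drop_nullable_length_le: "drop_nullable P al al' \<Longrightarrow> length al' \<le> length al"
  by (induction rule: drop_nullable.induct) auto

lemma drop_nullable_set_subset: "drop_nullable P al al' \<Longrightarrow> set al' \<subseteq> set al"
  by (induction rule: drop_nullable.induct) auto

lemma drop_nullable_yields_seq: "drop_nullable P al al' \<Longrightarrow> yields_seq P al' w \<Longrightarrow> yields_seq P al w"
proof (induction arbitrary: w rule: drop_nullable.induct)
  case (drop_nullable_keep al al' s)
  then show ?case by (fastforce simp: concat_rel_Cons)
next
  case (drop_nullable_drop s al al')
  then have "yields_seq P al w" by blast
  with drop_nullable_drop.hyps(1) show ?case
    unfolding concat_rel_Cons by force
qed simp

lemma list_all2_yields_drop_nullable:
  "list_all2 (\<lambda>s w. yields P s w \<and> (w \<noteq> [] \<longrightarrow> yields P' s w)) rhs ws \<Longrightarrow>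
   \<exists>al'. drop_nullable P rhs al' \<and> yields_seq P' al' (concat ws)"
proof (induction rule: list_all2_induct)
  case Nil
  show ?case by (auto intro: drop_nullable_Nil)
next
  case (Cons s rhs w ws)
  then obtain al' where "drop_nullable P rhs al'" "yields_seq P' al' (concat ws)"
    by blast
  show ?case
  proof (cases "w = []")
    case True
    with Cons.hyps(1) \<open>drop_nullable P rhs al'\<close> \<open>yields_seq P' al' (concat ws)\<close> show ?thesis
      by (auto intro: drop_nullable_drop)
  next
    case False
    with Cons.hyps(1) \<open>drop_nullable P rhs al'\<close> \<open>yields_seq P' al' (concat ws)\<close> show ?thesis
      by (intro exI[of _ "s # al'"]) (auto intro: drop_nullable_keep simp: concat_rel_Cons)
  qed
qed

lemma yields_eps_free: "yields P s w \<Longrightarrow> w \<noteq> [] \<Longrightarrow> yields (eps_free P) s w"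
proof (induction rule: yields.induct)
  case (yields_prod X rhs ws)
  from list_all2_yields_drop_nullable[OF yields_prod.IH] obtain al' where
    "drop_nullable P rhs al'" "yields_seq (eps_free P) al' (concat ws)"
    by blast
  moreover from this(2) yields_prod.prems have "al' \<noteq> []"
    by auto
  ultimately show ?case
    using yields_prod.hyps(1) by (auto simp: eps_free_def intro: yields_InlI)
qed (simp add: yields_terminal)

lemma eps_free_yields: "yields (eps_free P) s w \<Longrightarrow> yields P s w"
proof (induction rule: yields.induct)
  case (yields_prod X al' ws)
  then obtain al where "(X, al) \<in> P" "drop_nullable P al al'"
    unfolding eps_free_def by blast
  moreover from yields_prod.IH have "yields_seq P al' (concat ws)"
    unfolding concat_rel_def by (blast intro: list_all2_mono)
  ultimately show ?case
    by (blast intro: yields_InlI drop_nullable_yields_seq)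
qed (simp add: yields_terminal)

lemma nonempty_rhs_eps_free: "nonempty_rhs (eps_free P)"
  unfolding nonempty_rhs_def eps_free_def by auto

lemma yields_nonempty:
  assumes "nonempty_rhs P"
  shows "yields P s w \<Longrightarrow> w \<noteq> []"
proof (induction rule: yields.induct)
  case (yields_prod X rhs ws)
  with assms obtain s rhs' where "rhs = s # rhs'"
    unfolding nonempty_rhs_def by (cases rhs) auto
  with yields_prod.IH show ?case
    by (auto simp: list_all2_Cons1)
qed simp

lemma yields_seq_nonempty: "nonempty_rhs P \<Longrightarrow> yields_seq P al w \<Longrightarrow> al \<noteq> [] \<Longrightarrow> w \<noteq> []"
  by (cases al) (auto simp: concat_rel_Cons dest: yields_nonempty)

section \<open>A real-time generator from the left-corner construction\<close>

definition unit_step :: "(nat \<times> 'a sym list) set \<Rightarrow> 'a sym \<Rightarrow> 'a sym \<Rightarrow> bool" where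
  "unit_step P s t \<longleftrightarrow> (\<exists>B. t = Inl B \<and> (B, [s]) \<in> P)"

abbreviation unit_reach :: "(nat \<times> 'a sym list) set \<Rightarrow> 'a sym \<Rightarrow> 'a sym \<Rightarrow> bool" where
  "unit_reach P \<equiv> (unit_step P)\<^sup>*\<^sup>*"

text \<open>\<open>left_corner P C t v\<close>: some derivation tree of \<open>C\<close> has \<open>t\<close> on its leftmost branch, and the
  subtrees hanging off this branch to the right yield \<open>v\<close>.\<close>

inductive left_corner :: "(nat \<times> 'a sym list) set \<Rightarrow> nat \<Rightarrow> 'a sym \<Rightarrow> 'a list \<Rightarrow> bool" for P C where
  left_corner_refl: "left_corner P C (Inl C) []"
| left_corner_step: "(B, t # be) \<in> P \<Longrightarrow> yields_seq P be v1 \<Longrightarrow> left_corner P C (Inl B) v2 \<Longrightarrow>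
    left_corner P C t (v1 @ v2)"

lemma left_corner_yields: "left_corner P C t v \<Longrightarrow> yields P t u \<Longrightarrow> yields P (Inl C) (u @ v)"
proof (induction arbitrary: u rule: left_corner.induct)
  case (left_corner_step B t be v1 v2)
  from left_corner_step.hyps(2) left_corner_step.prems have "yields_seq P (t # be) (u @ v1)"
    by (auto simp: concat_rel_Cons)
  with left_corner_step.hyps(1) have "yields P (Inl B) (u @ v1)"
    by (rule yields_InlI)
  with left_corner_step.IH show ?case by fastforce
qed simp

lemma yields_left_corner:
  assumes ne: "nonempty_rhs P"
  shows "yields P s (a # v) \<Longrightarrow> left_corner P C s w \<Longrightarrow> left_corner P C (Inr a) (v @ w)"
proof (induction s "a # v" arbitrary: v w rule: yields.induct)
  case (yields_prod X rhs ws)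
  with ne obtain t be where rhs: "rhs = t # be"
    unfolding nonempty_rhs_def by (cases rhs) auto
  from yields_prod.hyps(2) have "list_all2 (yields P) rhs ws"
    by (rule list_all2_mono) simp
  with rhs obtain w0 ws' where ws: "ws = w0 # ws'" "yields P t w0" "list_all2 (yields P) be ws'"
    by (auto simp: list_all2_Cons1)
  from yields_prod.hyps(2) rhs ws(1) have IH:
    "\<And>v w. w0 = a # v \<Longrightarrow> left_corner P C t w \<Longrightarrow> left_corner P C (Inr a) (v @ w)"
    by simp
  from yields_nonempty[OF ne ws(2)] yields_prod.hyps(3) ws(1) obtain v0 where
    v0: "w0 = a # v0" "v = v0 @ concat ws'"
    by (cases w0) auto
  from ws(3) have "yields_seq P be (concat ws')"
    unfolding concat_rel_def by blast
  with yields_prod.hyps(1) yields_prod.prems rhs have "left_corner P C t (concat ws' @ w)"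
    by (auto intro: left_corner_step)
  from IH[OF v0(1) this] v0(2) show ?case by simp
qed simp

lemma yields_Inl_Cons_iff:
  "nonempty_rhs P \<Longrightarrow> yields P (Inl C) (a # v) \<longleftrightarrow> left_corner P C (Inr a) v"
  using yields_left_corner[of P "Inl C" a v C "[]"] left_corner_refl[of P C]
    left_corner_yields[of P C "Inr a" v "[a]"]
  by auto

lemma left_corner_unit_reach: "unit_reach P t t' \<Longrightarrow> left_corner P C t' v \<Longrightarrow> left_corner P C t v"
proof (induction rule: converse_rtranclp_induct)
  case (step s t)
  then obtain B where "t = Inl B" "(B, [s]) \<in> P"
    unfolding unit_step_def by blast
  with step.IH step.prems show ?case
    using left_corner_step[of B s "[]" P "[]" C v] by simp
qed

text \<open>Unit productions are absorbed into \<open>unit_reach\<close>; this is what makes every step of the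
  generator below emit a letter.\<close>

lemma left_corner_cases:
  assumes "left_corner P C t v"
  obtains (unit) "unit_reach P t (Inl C)" "v = []"
  | (prod) t' B be v1 v2 where "unit_reach P t t'" "(B, t' # be) \<in> P" "be \<noteq> []"
      "yields_seq P be v1" "left_corner P C (Inl B) v2" "v = v1 @ v2"
  using assms
proof (induction arbitrary: thesis rule: left_corner.induct)
  case left_corner_refl
  then show ?case by simp
next
  case (left_corner_step B t be v1 v2)
  show ?case
  proof (cases "be = []")
    case False
    with left_corner_step.hyps left_corner_step.prems(2) show ?thesis by blast
  next
    case True
    with left_corner_step.hyps(1,2) have step: "unit_step P t (Inl B)" and "v1 = []"
      by (simp_all add: unit_step_def)
    show ?thesis
    proof (rule left_corner_step.IH)
      assume "unit_reach P (Inl B) (Inl C)" "v2 = []"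
      with step \<open>v1 = []\<close> show thesis
        by (auto intro: left_corner_step.prems(1) converse_rtranclp_into_rtranclp)
    next
      fix t' B' be' v1' v2'
      assume "unit_reach P (Inl B) t'" "(B', t' # be') \<in> P" "be' \<noteq> []" "yields_seq P be' v1'"
        "left_corner P C (Inl B') v2'" "v2 = v1' @ v2'"
      with step \<open>v1 = []\<close> show thesis
        by (auto intro: left_corner_step.prems(2) converse_rtranclp_into_rtranclp)
    qed
  qed
qed

text \<open>\<open>Item C B\<close> stands for the still missing, nonempty part of a tree of \<open>C\<close> whose leftmost
  branch has been generated up to \<open>B\<close>.\<close>

datatype 'a frame = Sym "'a sym" | Item nat nat

fun frame_yields :: "(nat \<times> 'a sym list) set \<Rightarrow> 'a frame \<Rightarrow> 'a list \<Rightarrow> bool" where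
  "frame_yields P (Sym s) w \<longleftrightarrow> yields P s w"
| "frame_yields P (Item C B) w \<longleftrightarrow> left_corner P C (Inl B) w \<and> w \<noteq> []"

abbreviation frames_yield :: "(nat \<times> 'a sym list) set \<Rightarrow> 'a frame list \<Rightarrow> 'a list \<Rightarrow> bool" where
  "frames_yield P \<equiv> concat_rel (frame_yields P)"

lemma frames_yield_map_Sym [simp]: "frames_yield P (map Sym ss) w \<longleftrightarrow> yields_seq P ss w"
proof -
  have "(\<lambda>s. frame_yields P (Sym s)) = yields P"
    by (simp add: fun_eq_iff)
  then show ?thesis
    by (simp add: concat_rel_map)
qed

definition tail_frames :: "(nat \<times> 'a sym list) set \<Rightarrow> nat \<Rightarrow> nat \<Rightarrow> 'a frame list \<Rightarrow> bool" where
  "tail_frames P C B fs \<longleftrightarrow> fs = [Item C B] \<or> (fs = [] \<and> unit_reach P (Inl B) (Inl C))"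

lemma tail_frames_sound: "tail_frames P C B fs \<Longrightarrow> frames_yield P fs v \<Longrightarrow> left_corner P C (Inl B) v"
  unfolding tail_frames_def using left_corner_unit_reach left_corner_refl by fastforce

lemma tail_frames_complete:
  assumes ne: "nonempty_rhs P" and lc: "left_corner P C (Inl B) v"
  shows "\<exists>fs. tail_frames P C B fs \<and> frames_yield P fs v"
proof (cases "v = []")
  case True
  from lc have "unit_reach P (Inl B) (Inl C)"
    by (cases rule: left_corner_cases) (use True yields_seq_nonempty[OF ne] in auto)
  with True show ?thesis
    by (intro exI[of _ "[]"]) (simp add: tail_frames_def)
next
  case False
  with lc show ?thesis
    by (intro exI[of _ "[Item C B]"]) (simp add: tail_frames_def)
qed

text \<open>A frame \<open>Sym (Inl C)\<close> starts with a letter \<open>a\<close> and a climb along unit productions from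
  \<open>a\<close> either to \<open>C\<close> or to the left corner \<open>t\<close> of a production \<open>B \<rightarrow> t be\<close>; in the second case
  the siblings \<open>be\<close> and the completion of \<open>C\<close> from \<open>B\<close> are pushed. An item \<open>Item C B\<close> does
  the same for the sibling \<open>s\<close> following a left corner \<open>t\<close> reached from \<open>B\<close>.\<close>

inductive_set sym_moves :: "(nat \<times> 'a sym list) set \<Rightarrow> ('a frame \<times> 'a \<times> 'a frame list) set" for P where
  sym_move_terminal: "(Sym (Inr a), a, []) \<in> sym_moves P"
| sym_move_unit: "unit_reach P (Inr a) (Inl C) \<Longrightarrow> (Sym (Inl C), a, []) \<in> sym_moves P"
| sym_move_prod: "unit_reach P (Inr a) t \<Longrightarrow> (B, t # be) \<in> P \<Longrightarrow> be \<noteq> [] \<Longrightarrow> tail_frames P C B fs \<Longrightarrow>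
    (Sym (Inl C), a, map Sym be @ fs) \<in> sym_moves P"

inductive_set lc_moves :: "(nat \<times> 'a sym list) set \<Rightarrow> ('a frame \<times> 'a \<times> 'a frame list) set" for P where
  lc_move_sym: "m \<in> sym_moves P \<Longrightarrow> m \<in> lc_moves P"
| lc_move_item: "unit_reach P (Inl B) t \<Longrightarrow> (B', t # s # rest) \<in> P \<Longrightarrow> (Sym s, a, u) \<in> sym_moves P \<Longrightarrow>
    tail_frames P C B' fs \<Longrightarrow> (Item C B, a, u @ map Sym rest @ fs) \<in> lc_moves P"

lemma sym_move_sound:
  assumes "(X, a, u) \<in> sym_moves P" and "frames_yield P u w"
  shows "frame_yields P X (a # w)"
  using assms(1)
proof cases
  case (sym_move_unit C)
  then have "left_corner P C (Inr a) []"
    using left_corner_unit_reach left_corner_refl by blast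
  with sym_move_unit assms(2) show ?thesis
    using left_corner_yields[of P C "Inr a" "[]" "[a]"] by simp
next
  case (sym_move_prod t B be C fs)
  with assms(2) obtain v1 v2 where "w = v1 @ v2" "yields_seq P be v1" "frames_yield P fs v2"
    by (auto simp: concat_rel_append)
  with sym_move_prod have "left_corner P C (Inr a) w"
    by (blast intro: left_corner_unit_reach left_corner_step tail_frames_sound)
  with sym_move_prod show ?thesis
    using left_corner_yields[of P C "Inr a" w "[a]"] by simp
qed (use assms(2) in simp)

lemma lc_move_sound:
  assumes "(X, a, u) \<in> lc_moves P" and "frames_yield P u w"
  shows "frame_yields P X (a # w)"
  using assms(1)
proof cases
  case lc_move_sym
  with assms(2) show ?thesis by (simp add: sym_move_sound)
next
  case (lc_move_item B t B' s rest u' C fs)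
  with assms(2) obtain x1 x2 x3 where x: "w = x1 @ x2 @ x3" "frames_yield P u' x1" "yields_seq P rest x2"
    "frames_yield P fs x3"
    by (auto simp: concat_rel_append)
  with lc_move_item have "yields P s (a # x1)"
    using sym_move_sound by fastforce
  with x(3) have "yields_seq P (s # rest) ((a # x1) @ x2)"
    unfolding concat_rel_Cons by blast
  with lc_move_item x have "left_corner P C t (a # w)"
    using left_corner_step[of B' t "s # rest" P _ C x3] tail_frames_sound by fastforce
  with lc_move_item show ?thesis
    by (auto intro: left_corner_unit_reach)
qed

lemma sym_move_complete:
  assumes ne: "nonempty_rhs P" and y: "yields P s w"
  shows "\<exists>a w' u. w = a # w' \<and> (Sym s, a, u) \<in> sym_moves P \<and> frames_yield P u w'"
proof (cases s)
  case (Inr a)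
  with y show ?thesis by (auto intro: sym_move_terminal)
next
  case (Inl C)
  from yields_nonempty[OF ne y] obtain a v where w: "w = a # v"
    by (cases w) auto
  with y Inl ne have "left_corner P C (Inr a) v"
    by (simp add: yields_Inl_Cons_iff)
  then show ?thesis
  proof (cases rule: left_corner_cases)
    case unit
    with w Inl show ?thesis by (auto intro: sym_move_unit)
  next
    case (prod t B be v1 v2)
    from tail_frames_complete[OF ne prod(5)] obtain fs where "tail_frames P C B fs" "frames_yield P fs v2"
      by blast
    with prod w Inl show ?thesis
      by (intro exI[of _ a] exI[of _ v] exI[of _ "map Sym be @ fs"])
        (auto intro: sym_move_prod simp: concat_rel_append)
  qed
qed

lemma lc_move_complete:
  assumes ne: "nonempty_rhs P" and y: "frame_yields P X w"
  shows "\<exists>a w' u. w = a # w' \<and> (X, a, u) \<in> lc_moves P \<and> frames_yield P u w'"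
proof (cases X)
  case (Sym s)
  with sym_move_complete[OF ne] y show ?thesis
    by (fastforce intro: lc_move_sym)
next
  case (Item C B)
  with y have lc: "left_corner P C (Inl B) w" and "w \<noteq> []"
    by auto
  from lc show ?thesis
  proof (cases rule: left_corner_cases)
    case unit
    with \<open>w \<noteq> []\<close> show ?thesis by simp
  next
    case (prod t B' be v1 v2)
    then obtain s rest x1 x2 where be: "be = s # rest" and "v1 = x1 @ x2" "yields P s x1" "yields_seq P rest x2"
      by (cases be) (auto simp: concat_rel_Cons)
    moreover from sym_move_complete[OF ne \<open>yields P s x1\<close>] obtain a x1' u where
      "x1 = a # x1'" "(Sym s, a, u) \<in> sym_moves P" "frames_yield P u x1'"
      by blast
    moreover from tail_frames_complete[OF ne prod(5)] obtain fs where
      "tail_frames P C B' fs" "frames_yield P fs v2"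
      by blast
    ultimately show ?thesis
      using prod Item
      by (intro exI[of _ a] exI[of _ "x1' @ x2 @ v2"] exI[of _ "u @ map Sym rest @ fs"])
        (auto intro: lc_move_item simp: concat_rel_append)
  qed
qed

inductive rt_gen :: "('f \<times> 'a \<times> 'f list) set \<Rightarrow> 'f list \<Rightarrow> 'a list \<Rightarrow> bool" for M where
  rt_gen_Nil: "rt_gen M [] []"
| rt_gen_Cons: "(X, a, u) \<in> M \<Longrightarrow> rt_gen M (u @ fs) w \<Longrightarrow> rt_gen M (X # fs) (a # w)"

lemma rt_gen_empty_word_iff [simp]: "rt_gen M fs [] \<longleftrightarrow> fs = []"
  by (auto elim: rt_gen.cases intro: rt_gen_Nil)

lemma rt_gen_empty_stack_iff [simp]: "rt_gen M [] w \<longleftrightarrow> w = []"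
  by (auto elim: rt_gen.cases intro: rt_gen_Nil)

lemma rt_gen_lc_moves_sound: "rt_gen (lc_moves P) fs w \<Longrightarrow> frames_yield P fs w"
proof (induction rule: rt_gen.induct)
  case (rt_gen_Cons X a u fs w)
  then obtain w1 w2 where "w = w1 @ w2" "frames_yield P u w1" "frames_yield P fs w2"
    by (auto simp: concat_rel_append)
  with lc_move_sound[OF rt_gen_Cons.hyps(1)] show ?case
    unfolding concat_rel_Cons by (metis append_Cons)
qed simp

lemma rt_gen_lc_moves_complete:
  assumes ne: "nonempty_rhs P"
  shows "frames_yield P fs w \<Longrightarrow> rt_gen (lc_moves P) fs w"
proof (induction "length w" arbitrary: fs w rule: less_induct)
  case less
  show ?case
  proof (cases fs)
    case Nil
    with less.prems show ?thesis by (simp add: rt_gen_Nil)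
  next
    case (Cons X fs')
    with less.prems obtain w1 w2 where "w = w1 @ w2" "frame_yields P X w1" "frames_yield P fs' w2"
      by (auto simp: concat_rel_Cons)
    moreover from lc_move_complete[OF ne this(2)] obtain a w1' u where
      "w1 = a # w1'" "(X, a, u) \<in> lc_moves P" "frames_yield P u w1'"
      by blast
    ultimately show ?thesis
      using less.hyps[of "w1' @ w2" "u @ fs'"] Cons
      by (auto intro: rt_gen_Cons simp: concat_rel_append)
  qed
qed

lemma rt_gen_lc_moves_iff_yields:
  "rt_gen (lc_moves (eps_free P)) [Sym s] w \<longleftrightarrow> yields P s w \<and> w \<noteq> []"
proof
  assume "rt_gen (lc_moves (eps_free P)) [Sym s] w"
  then have "yields (eps_free P) s w"
    using rt_gen_lc_moves_sound by fastforce
  then show "yields P s w \<and> w \<noteq> []"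
    using eps_free_yields yields_nonempty[OF nonempty_rhs_eps_free] by blast
next
  assume "yields P s w \<and> w \<noteq> []"
  then have "yields (eps_free P) s w"
    by (simp add: yields_eps_free)
  then have "frames_yield (eps_free P) [Sym s] w"
    by simp
  then show "rt_gen (lc_moves (eps_free P)) [Sym s] w"
    by (rule rt_gen_lc_moves_complete[OF nonempty_rhs_eps_free])
qed

section \<open>Simulating a real-time generator\<close>

text \<open>The automaton keeps the last emitted letter (its output) and a top segment of at most \<open>K\<close>
  frames of the generator's stack (the cache) in its state, and stores the rest of the frame
  stack as blocks of at most \<open>K\<close> frames on its own stack, with the empty block marking the bottom.\<close>

definition blocks :: "'f set \<Rightarrow> nat \<Rightarrow> 'f list set" where
  "blocks Fr K = {b. set b \<subseteq> Fr \<and> length b \<le> K}"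

inductive_set cache_trans :: "('f \<times> 'a \<times> 'f list) set \<Rightarrow> 'a set \<Rightarrow> 'f set \<Rightarrow> nat \<Rightarrow>
    (('a \<times> 'f list) \<times> 'f list option \<times> 'f list option \<times> ('a \<times> 'f list)) set"
  for M Sig Fr K where
  cache_refill: "(a, [X]) \<in> Sig \<times> blocks Fr K \<Longrightarrow> (X, a', []) \<in> M \<Longrightarrow> (a', b) \<in> Sig \<times> blocks Fr K \<Longrightarrow>
    ((a, [X]), Some b, None, (a', b)) \<in> cache_trans M Sig Fr K"
| cache_keep: "(a, X # rest) \<in> Sig \<times> blocks Fr K \<Longrightarrow> (X, a', u) \<in> M \<Longrightarrow> u @ rest \<noteq> [] \<Longrightarrow>
    (a', u @ rest) \<in> Sig \<times> blocks Fr K \<Longrightarrow> ((a, X # rest), None, None, (a', u @ rest)) \<in> cache_trans M Sig Fr K"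
| cache_spill: "(a, X # rest) \<in> Sig \<times> blocks Fr K \<Longrightarrow> (X, a', u) \<in> M \<Longrightarrow> u @ rest = c @ b \<Longrightarrow>
    c \<noteq> [] \<Longrightarrow> b \<noteq> [] \<Longrightarrow> (a', c) \<in> Sig \<times> blocks Fr K \<Longrightarrow> b \<in> blocks Fr K \<Longrightarrow>
    ((a, X # rest), None, Some b, (a', c)) \<in> cache_trans M Sig Fr K"

definition cache_pda :: "('f \<times> 'a \<times> 'f list) set \<Rightarrow> 'a set \<Rightarrow> 'f set \<Rightarrow> nat \<Rightarrow> 'f \<Rightarrow>
    ('a \<times> 'f list, 'f list, 'a) pda" where
  "cache_pda M Sig Fr K S = \<lparr>pstates = Sig \<times> blocks Fr K, psyms = blocks Fr K, ptrans = cache_trans M Sig Fr K,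
     pout = fst, pinit = {(a, u) \<in> Sig \<times> blocks Fr K. (S, a, u) \<in> M \<and> u \<noteq> []}, pfin = Sig \<times> {[]}\<rparr>"

lemma cache_pda_simps [simp]:
  "pstates (cache_pda M Sig Fr K S) = Sig \<times> blocks Fr K" "psyms (cache_pda M Sig Fr K S) = blocks Fr K"
  "ptrans (cache_pda M Sig Fr K S) = cache_trans M Sig Fr K" "pout (cache_pda M Sig Fr K S) = fst"
  "pinit (cache_pda M Sig Fr K S) = {(a, u) \<in> Sig \<times> blocks Fr K. (S, a, u) \<in> M \<and> u \<noteq> []}"
  "pfin (cache_pda M Sig Fr K S) = Sig \<times> {[]}"
  by (simp_all add: cache_pda_def)

text \<open>\<open>last (c # R) = []\<close> says that the bottom block is empty, or, if there are no blocks at all,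
  that the cache is empty.\<close>

lemma cache_pda_sound:
  fixes M :: "('f \<times> 'a \<times> 'f list) set"
  shows "prun (cache_pda M Sig Fr K S) ((a, c), R) (q, []) w \<Longrightarrow> q \<in> Sig \<times> {[]} \<Longrightarrow>
   rt_gen M (c @ concat R) w \<and> last (c # R) = []"
proof (induction "((a, c), R)" "(q, [] :: 'f list list)" w arbitrary: a c R rule: prun.induct)
  case prun_refl
  then show ?case by (auto intro: rt_gen_Nil)
next
  case (prun_step d w)
  from prun_step.hyps(1) obtain g g' a' c' al where
    trans: "((a, c), g, g', a', c') \<in> cache_trans M Sig Fr K" and
    R: "R = list_of_opt g @ al" and d: "d = ((a', c'), list_of_opt g' @ al)"
    unfolding pmove_def by force
  from prun_step.hyps(3)[of a' c' "list_of_opt g' @ al"] prun_step.prems d have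
    IH: "rt_gen M (c' @ concat (list_of_opt g' @ al)) w" "last (c' # list_of_opt g' @ al) = []"
    by auto
  from trans show ?case
  proof (cases rule: cache_trans.cases)
    case cache_refill
    with R IH d show ?thesis by (auto intro: rt_gen_Cons)
  next
    case cache_keep
    with R IH d show ?thesis by (auto intro: rt_gen_Cons)
  next
    case cache_spill
    with R IH d show ?thesis by (auto intro: rt_gen_Cons simp flip: append_assoc)
  qed
qed

fun block_stack :: "'f set \<Rightarrow> nat \<Rightarrow> 'f list list \<Rightarrow> bool" where
  "block_stack Fr K [] \<longleftrightarrow> False"
| "block_stack Fr K [b] \<longleftrightarrow> b = []"
| "block_stack Fr K (b # R) \<longleftrightarrow> b \<noteq> [] \<and> b \<in> blocks Fr K \<and> block_stack Fr K R"

lemma block_stack_Cons: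
  "R \<noteq> [] \<Longrightarrow> block_stack Fr K (b # R) \<longleftrightarrow> b \<noteq> [] \<and> b \<in> blocks Fr K \<and> block_stack Fr K R"
  by (cases R) simp_all

lemma blocks_split:
  assumes "set T \<subseteq> Fr" and "K < length T" and "length T \<le> 2 * K"
  obtains c b where "T = c @ b" "c \<noteq> []" "b \<noteq> []" "c \<in> blocks Fr K" "b \<in> blocks Fr K"
  using assms
  by (intro that[of "take (length T - K) T" "drop (length T - K) T"])
    (auto simp: blocks_def dest: in_set_takeD in_set_dropD)

lemma cache_refill_move:
  "(a, [X]) \<in> Sig \<times> blocks Fr K \<Longrightarrow> (X, a', []) \<in> M \<Longrightarrow> (a', b) \<in> Sig \<times> blocks Fr K \<Longrightarrow>
   pmove (cache_pda M Sig Fr K S) ((a, [X]), b # R) ((a', b), R)"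
  using pmoveI[of "(a, [X])" "Some b" None "(a', b)" "cache_pda M Sig Fr K S" R] by (simp add: cache_refill)

lemma cache_keep_move:
  "(a, X # rest) \<in> Sig \<times> blocks Fr K \<Longrightarrow> (X, a', u) \<in> M \<Longrightarrow> u @ rest \<noteq> [] \<Longrightarrow>
   (a', u @ rest) \<in> Sig \<times> blocks Fr K \<Longrightarrow> R \<noteq> [] \<Longrightarrow>
   pmove (cache_pda M Sig Fr K S) ((a, X # rest), R) ((a', u @ rest), R)"
  using pmoveI[of "(a, X # rest)" None None "(a', u @ rest)" "cache_pda M Sig Fr K S" R]
  by (simp add: cache_keep)

lemma cache_spill_move:
  "(a, X # rest) \<in> Sig \<times> blocks Fr K \<Longrightarrow> (X, a', u) \<in> M \<Longrightarrow> u @ rest = c @ b \<Longrightarrow> c \<noteq> [] \<Longrightarrow> b \<noteq> [] \<Longrightarrow>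
   (a', c) \<in> Sig \<times> blocks Fr K \<Longrightarrow> b \<in> blocks Fr K \<Longrightarrow> R \<noteq> [] \<Longrightarrow>
   pmove (cache_pda M Sig Fr K S) ((a, X # rest), R) ((a', c), b # R)"
  using pmoveI[of "(a, X # rest)" None "Some b" "(a', c)" "cache_pda M Sig Fr K S" R]
  by (simp add: cache_spill)

context
  fixes M :: "('f \<times> 'a \<times> 'f list) set" and Sig :: "'a set" and Fr :: "'f set" and K :: nat
  assumes closed: "\<And>X a u. X \<in> Fr \<Longrightarrow> (X, a, u) \<in> M \<Longrightarrow> a \<in> Sig \<and> set u \<subseteq> Fr \<and> length u < K"
begin

lemma cache_pda_step [consumes 3, case_names final step]:
  assumes move: "(X, a', u) \<in> M" and state: "(a, X # rest) \<in> Sig \<times> blocks Fr K" and R: "block_stack Fr K R"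
  obtains (final) "u @ rest @ concat R = []" "a' \<in> Sig"
      "pmove (cache_pda M Sig Fr K S) ((a, X # rest), R) ((a', []), [])"
    | (step) c R' where "c \<noteq> []" "(a', c) \<in> Sig \<times> blocks Fr K" "block_stack Fr K R'"
      "c @ concat R' = u @ rest @ concat R" "pmove (cache_pda M Sig Fr K S) ((a, X # rest), R) ((a', c), R')"
proof -
  let ?B = "cache_pda M Sig Fr K S"
  from state have "X \<in> Fr" "set rest \<subseteq> Fr" "length rest < K"
    by (auto simp: blocks_def)
  with closed[OF _ move] have a': "a' \<in> Sig" and T: "set (u @ rest) \<subseteq> Fr" "length (u @ rest) \<le> 2 * K"
    by auto
  from R obtain b R' where R_eq: "R = b # R'"
    by (cases R) auto
  consider "u @ rest = []" | "u @ rest \<noteq> []" "length (u @ rest) \<le> K" | "K < length (u @ rest)"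
    by fastforce
  then show thesis
  proof cases
    case 1
    with state a' R R_eq have "(a, [X]) \<in> Sig \<times> blocks Fr K" "(a', b) \<in> Sig \<times> blocks Fr K"
      by (cases R'; auto simp: blocks_def)+
    with move 1 R_eq have move': "pmove ?B ((a, X # rest), R) ((a', b), R')"
      by (simp add: cache_refill_move)
    show thesis
    proof (cases "R' = []")
      case True
      with R R_eq have "b = []" by simp
      with 1 True R_eq a' move' show thesis by (intro final) simp_all
    next
      case False
      with R R_eq have "b \<noteq> []" "block_stack Fr K R'"
        by (simp_all add: block_stack_Cons)
      with 1 R_eq \<open>(a', b) \<in> Sig \<times> blocks Fr K\<close> move' show thesis
        by (intro step[of b R']) simp_all
    qed
  next
    case 2
    with state move a' T R R_eq show thesis
      by (intro step[of "u @ rest" R]) (simp_all add: blocks_def cache_keep_move)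
  next
    case 3
    with T obtain c b' where "u @ rest = c @ b'" "c \<noteq> []" "b' \<noteq> []" "c \<in> blocks Fr K" "b' \<in> blocks Fr K"
      by (elim blocks_split)
    with state move a' R R_eq show thesis
      by (intro step[of c "b' # R"]) (simp_all add: block_stack_Cons cache_spill_move)
  qed
qed

lemma cache_pda_complete:
  shows "rt_gen M (c @ concat R) w \<Longrightarrow> c \<noteq> [] \<Longrightarrow> (a, c) \<in> Sig \<times> blocks Fr K \<Longrightarrow> block_stack Fr K R \<Longrightarrow>
    \<exists>q \<in> Sig \<times> {[]}. prun (cache_pda M Sig Fr K S) ((a, c), R) (q, []) w"
proof (induction "c @ concat R" w arbitrary: a c R rule: rt_gen.induct)
  case rt_gen_Nil
  then show ?case by simp
next
  case (rt_gen_Cons X a' u fs w)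
  then obtain rest where c: "c = X # rest" and fs: "fs = rest @ concat R"
    by (cases c) auto
  from rt_gen_Cons.prems(2) c have state: "(a, X # rest) \<in> Sig \<times> blocks Fr K" by simp
  from rt_gen_Cons.hyps(1) state rt_gen_Cons.prems(3) show ?case
  proof (cases rule: cache_pda_step[where S = S])
    case final
    from final(1) rt_gen_Cons.hyps(2) fs have "rt_gen M [] w" by metis
    then have "w = []" by simp
    with final c show ?thesis
      using prun_single by fastforce
  next
    case (step c' R')
    with rt_gen_Cons.hyps(3)[of c' R' a'] fs obtain q where
      "q \<in> Sig \<times> {[]}" "prun (cache_pda M Sig Fr K S) ((a', c'), R') (q, []) w"
      by auto
    with step(5) c show ?thesis
      using prun.prun_step by fastforce
  qed
qed

lemma plang_cache_pda:
  shows "plang (cache_pda M Sig Fr K S) =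
    {a # w | a u w. (S, a, u) \<in> M \<and> u \<noteq> [] \<and> (a, u) \<in> Sig \<times> blocks Fr K \<and> rt_gen M u w}"
    (is "_ = ?L")
proof
  show "plang (cache_pda M Sig Fr K S) \<subseteq> ?L"
  proof
    fix x assume "x \<in> plang (cache_pda M Sig Fr K S)"
    then obtain a u g q w where "x = a # w" "(S, a, u) \<in> M" "u \<noteq> []" "(a, u) \<in> Sig \<times> blocks Fr K"
      "q \<in> Sig \<times> {[]}" "prun (cache_pda M Sig Fr K S) ((a, u), [g]) (q, []) w"
      unfolding plang_def by auto
    with cache_pda_sound[of M Sig Fr K S a u "[g]" q w] show "x \<in> ?L"
      by auto
  qed
next
  show "?L \<subseteq> plang (cache_pda M Sig Fr K S)"
  proof
    fix x assume "x \<in> ?L"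
    then obtain a u w where "x = a # w" "(S, a, u) \<in> M" "u \<noteq> []" "(a, u) \<in> Sig \<times> blocks Fr K" "rt_gen M u w"
      by blast
    moreover from this cache_pda_complete[of u "[[]]" w a S] obtain q where
      "q \<in> Sig \<times> {[]}" "prun (cache_pda M Sig Fr K S) ((a, u), [[]]) (q, []) w"
      by auto
    moreover have "[] \<in> blocks Fr K"
      by (simp add: blocks_def)
    ultimately show "x \<in> plang (cache_pda M Sig Fr K S)"
      unfolding plang_def by force
  qed
qed

end

section \<open>From grammars to Moore push-down automata\<close>

definition syms :: "nat set \<Rightarrow> 'a set \<Rightarrow> 'a sym set" where
  "syms N Sig = Inl ` N \<union> Inr ` Sig"

lemma in_syms_iff [simp]: "Inl X \<in> syms N Sig \<longleftrightarrow> X \<in> N" "Inr a \<in> syms N Sig \<longleftrightarrow> a \<in> Sig"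
  by (auto simp: syms_def)

definition frames :: "nat set \<Rightarrow> 'a set \<Rightarrow> 'a frame set" where
  "frames N Sig = Sym ` syms N Sig \<union> (\<lambda>(C, B). Item C B) ` (N \<times> N)"

lemma in_frames_iff [simp]:
  "Sym s \<in> frames N Sig \<longleftrightarrow> s \<in> syms N Sig" "Item C B \<in> frames N Sig \<longleftrightarrow> C \<in> N \<and> B \<in> N"
  by (auto simp: frames_def)

definition prods_bounded :: "nat set \<Rightarrow> 'a set \<Rightarrow> nat \<Rightarrow> (nat \<times> 'a sym list) set \<Rightarrow> bool" where
  "prods_bounded N Sig m P \<longleftrightarrow> (\<forall>(X, al) \<in> P. X \<in> N \<and> set al \<subseteq> syms N Sig \<and> length al \<le> m)"

lemma wf_cfg_prods_bounded:
  assumes "wf_cfg Sig G"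
  obtains m where "prods_bounded (nonterms G) Sig m (prods G)"
proof
  let ?m = "Max (length ` snd ` prods G)"
  show "prods_bounded (nonterms G) Sig ?m (prods G)"
    unfolding prods_bounded_def
  proof (intro ballI, clarify)
    fix X rhs assume X: "(X, rhs) \<in> prods G"
    with assms have "X \<in> nonterms G" "\<forall>s \<in> set rhs. case s of Inl Y \<Rightarrow> Y \<in> nonterms G | Inr a \<Rightarrow> a \<in> Sig"
      and "finite (prods G)"
      unfolding wf_cfg_def by fastforce+
    moreover from this(3) X have "length rhs \<le> ?m"
      by (force intro: Max_ge)
    moreover have "s \<in> syms (nonterms G) Sig" if "case s of Inl Y \<Rightarrow> Y \<in> nonterms G | Inr a \<Rightarrow> a \<in> Sig" for s
      using that by (cases s) simp_all
    ultimately show "X \<in> nonterms G \<and> set rhs \<subseteq> syms (nonterms G) Sig \<and> length rhs \<le> ?m"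
      by blast
  qed
qed

lemma prods_bounded_eps_free: "prods_bounded N Sig m P \<Longrightarrow> prods_bounded N Sig m (eps_free P)"
  unfolding prods_bounded_def eps_free_def
  by (fastforce dest: drop_nullable_length_le drop_nullable_set_subset)

lemma unit_reach_cases: "unit_reach P s t \<Longrightarrow> s = t \<or> (\<exists>B. (B, [s]) \<in> P)"
  by (erule converse_rtranclpE) (auto simp: unit_step_def)

lemma tail_frames_in_frames:
  "tail_frames P C B fs \<Longrightarrow> C \<in> N \<Longrightarrow> B \<in> N \<Longrightarrow> set fs \<subseteq> frames N Sig \<and> length fs \<le> 1"
  unfolding tail_frames_def by auto

lemma sym_moves_closed:
  assumes bounded: "prods_bounded N Sig m P"
    and move: "(Sym s, a, u) \<in> sym_moves P" and s: "s \<in> syms N Sig"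
  shows "a \<in> Sig \<and> set u \<subseteq> frames N Sig \<and> length u \<le> m"
proof -
  have rhs: "B \<in> N \<and> set al \<subseteq> syms N Sig \<and> length al \<le> m" if "(B, al) \<in> P" for B al
    using bounded that unfolding prods_bounded_def by blast
  have letter: "a \<in> Sig" if "unit_reach P (Inr a) t" "t = Inr a \<longrightarrow> (\<exists>B be. (B, t # be) \<in> P)" for t
    using unit_reach_cases[OF that(1)] that(2) rhs by fastforce
  from move show ?thesis
  proof cases
    case sym_move_terminal
    with s show ?thesis by simp
  next
    case (sym_move_unit C)
    then show ?thesis using letter[of "Inl C"] by simp
  next
    case (sym_move_prod t B be C fs)
    from rhs[OF sym_move_prod(4)] have "B \<in> N" "set be \<subseteq> syms N Sig" "Suc (length be) \<le> m"
      by simp_all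
    moreover from s sym_move_prod(1) have "C \<in> N"
      by simp
    moreover from sym_move_prod(3,4) have "a \<in> Sig"
      by (blast intro: letter)
    ultimately show ?thesis
      using sym_move_prod(2) tail_frames_in_frames[OF sym_move_prod(6), of N Sig]
      by auto
  qed
qed

lemma lc_moves_closed:
  assumes bounded: "prods_bounded N Sig m P"
    and X: "X \<in> frames N Sig" and move: "(X, a, u) \<in> lc_moves P"
  shows "a \<in> Sig \<and> set u \<subseteq> frames N Sig \<and> length u < 2 * m + 1"
  using move
proof cases
  case lc_move_sym
  then obtain s where "X = Sym s"
    by (auto elim: sym_moves.cases)
  with X lc_move_sym sym_moves_closed[OF bounded, of s a u] show ?thesis
    by simp
next
  case (lc_move_item B t B' s rest u' C fs)
  from bounded lc_move_item(4) have "B' \<in> N" "set (t # s # rest) \<subseteq> syms N Sig" "length (t # s # rest) \<le> m"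
    unfolding prods_bounded_def by blast+
  moreover from X lc_move_item(1) have "C \<in> N"
    by simp
  moreover from this \<open>B' \<in> N\<close> have "set fs \<subseteq> frames N Sig \<and> length fs \<le> 1"
    by (rule tail_frames_in_frames[OF lc_move_item(6)])
  moreover from \<open>set (t # s # rest) \<subseteq> syms N Sig\<close> have "a \<in> Sig \<and> set u' \<subseteq> frames N Sig \<and> length u' \<le> m"
    using sym_moves_closed[OF bounded lc_move_item(5)] by simp
  ultimately show ?thesis
    using lc_move_item(2) by auto
qed

lemma wf_pda_cache_pda:
  assumes "finite Sig" and "finite Fr"
  shows "wf_pda Sig (cache_pda M Sig Fr K S)"
proof -
  have "finite (blocks Fr K)"
    using assms(2) finite_lists_length_le[of Fr K] by (simp add: blocks_def)
  moreover have trans: "((a, c), g, g', a', c') \<in> cache_trans M Sig Fr K \<Longrightarrow>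
      (a, c) \<in> Sig \<times> blocks Fr K \<and> (a', c') \<in> Sig \<times> blocks Fr K \<and> set_option g \<subseteq> blocks Fr K \<and>
      set_option g' \<subseteq> blocks Fr K \<and> (g = None \<or> g' = None)" for a c g g' a' c'
    by (erule cache_trans.cases) auto
  moreover have "[] \<in> blocks Fr K"
    by (simp add: blocks_def)
  ultimately show ?thesis
    using assms(1) unfolding wf_pda_def by (auto dest!: trans)
qed

lemma plang_lc_cache_pda:
  assumes bounded: "prods_bounded N Sig m P" and "C \<in> N"
  defines "M \<equiv> lc_moves (eps_free P)"
  shows "plang (cache_pda M Sig (frames N Sig) (2 * m + 1) (Sym (Inl C))) = {w. yields P (Inl C) w \<and> 2 \<le> length w}"
proof -
  let ?Fr = "frames N Sig" and ?K = "2 * m + 1" and ?S = "Sym (Inl C)"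
  have closed: "a \<in> Sig \<and> set u \<subseteq> ?Fr \<and> length u < ?K" if "X \<in> ?Fr" "(X, a, u) \<in> M" for X a u
    using lc_moves_closed[OF prods_bounded_eps_free[OF bounded] that[unfolded M_def]] .
  have L: "plang (cache_pda M Sig ?Fr ?K ?S) =
      {a # w | a u w. (?S, a, u) \<in> M \<and> u \<noteq> [] \<and> (a, u) \<in> Sig \<times> blocks ?Fr ?K \<and> rt_gen M u w}"
    using closed by (rule plang_cache_pda)
  show ?thesis
  proof (intro set_eqI iffI)
    fix x assume "x \<in> plang (cache_pda M Sig ?Fr ?K ?S)"
    then obtain a u w where "x = a # w" "(?S, a, u) \<in> M" "rt_gen M u w" "u \<noteq> []"
      unfolding L by blast
    then have "rt_gen M [?S] x" "w \<noteq> []"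
      using rt_gen_Cons[of ?S a u M "[]" w] by auto
    with \<open>x = a # w\<close> show "x \<in> {w. yields P (Inl C) w \<and> 2 \<le> length w}"
      by (auto simp: M_def rt_gen_lc_moves_iff_yields Suc_le_eq)
  next
    fix x assume "x \<in> {w. yields P (Inl C) w \<and> 2 \<le> length w}"
    then have "rt_gen M [?S] x" "2 \<le> length x"
      by (auto simp: M_def rt_gen_lc_moves_iff_yields)
    then obtain a u w where "x = a # w" and move: "(?S, a, u) \<in> M" and "rt_gen M u w"
      by (auto elim: rt_gen.cases)
    moreover from this \<open>2 \<le> length x\<close> have "u \<noteq> []"
      by auto
    moreover from \<open>C \<in> N\<close> closed[OF _ move] have "(a, u) \<in> Sig \<times> blocks ?Fr ?K"
      by (auto simp: blocks_def)
    ultimately show "x \<in> plang (cache_pda M Sig ?Fr ?K ?S)"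
      unfolding L by blast
  qed
qed

lemma context_free_imp_mpda:
  assumes "finite Sig" and G: "wf_cfg Sig G"
  shows "\<exists>A. wf_mpda Sig A \<and> mpda_lang A = {w \<in> cfg_lang G. 2 \<le> length w}"
proof -
  obtain m where "prods_bounded (nonterms G) Sig m (prods G)"
    using wf_cfg_prods_bounded[OF G] .
  moreover have "start G \<in> nonterms G" "finite (frames (nonterms G) Sig)"
    using assms by (simp_all add: frames_def syms_def wf_cfg_def)
  ultimately show ?thesis
    using wf_pda_imp_mpda[OF wf_pda_cache_pda[OF assms(1)]] plang_lc_cache_pda
    by (fastforce simp: cfg_lang_eq_yields)
qed

theorem theorem3p2:
  fixes Sig :: "'a set" and L :: "'a list set"
  assumes "finite Sig" and "L \<subseteq> lists Sig"
  shows "(\<exists>A. wf_mpda Sig A \<and> mpda_lang A = L) \<longleftrightarrow>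
         (context_free Sig L \<and> (\<forall>w \<in> L. 2 \<le> length w))"
proof
  assume "\<exists>A. wf_mpda Sig A \<and> mpda_lang A = L"
  then obtain A where "wf_mpda Sig A" "mpda_lang A = L" by blast
  then show "context_free Sig L \<and> (\<forall>w \<in> L. 2 \<le> length w)"
    using mpda_lang_context_free plang_length_ge_2 by (auto simp: mpda_lang_eq_plang)
next
  assume "context_free Sig L \<and> (\<forall>w \<in> L. 2 \<le> length w)"
  then obtain G where "wf_cfg Sig G" "L = {w \<in> cfg_lang G. 2 \<le> length w}"
    unfolding context_free_def by force
  with context_free_imp_mpda[OF assms(1)] show "\<exists>A. wf_mpda Sig A \<and> mpda_lang A = L"
    by blast
qed

end
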